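(* Let $S$ be a left denominator set of a ring $R$ whose core $S_c$ is nonempty. Then (1) $SS_c\subseteq S_c$; and (2) for every $s\in S$ there exists $t\in S$ such that $ts\in S_c$.
   Context: All rings are associative with $1$. A multiplicative subset $S$ of $R$ ($1\in S$, $0\notin S$, closed under multiplication) is a left Ore set if $Sr\cap Rs\neq\emptyset$ for all $r\in R$, $s\in S$; for it, $\mathrm{ass}(S):=\{r\in R: sr=0\text{ for some } s\in S\}$. A left Ore set $S$ is a left denominator set if $rs=0$ ($r\in R$, $s\in S$) implies $tr=0$ for some $t\in S$. For $s\in R$, $\ker(s\cdot):=\{r\in R: sr=0\}$. The core of a left Ore set $S$ is $S_c:=\{s\in S:\ker(s\cdot)=\mathrm{ass}(S)\}$. $SS_c$ denotes $\{st: s\in S, t\in S_c\}$. *)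

theory Defs
  imports Main
begin

definition mult_subset :: "'a::ring_1 set \<Rightarrow> bool" where
  "mult_subset S \<longleftrightarrow> 1 \<in> S \<and> 0 \<notin> S \<and> (\<forall>s\<in>S. \<forall>t\<in>S. s * t \<in> S)"

definition left_ore_set :: "'a::ring_1 set \<Rightarrow> bool" where
  "left_ore_set S \<longleftrightarrow> mult_subset S \<and>
     (\<forall>r s. s \<in> S \<longrightarrow> (\<exists>t\<in>S. \<exists>r'. t * r = r' * s))"

definition ass :: "'a::ring_1 set \<Rightarrow> 'a set" where
  "ass S = {r. \<exists>s\<in>S. s * r = 0}"

definition left_denominator_set :: "'a::ring_1 set \<Rightarrow> bool" where
  "left_denominator_set S \<longleftrightarrow> left_ore_set S \<and>
     (\<forall>r. \<forall>s\<in>S. r * s = 0 \<longrightarrow> (\<exists>t\<in>S. t * r = 0))"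

definition left_kernel :: "'a::ring_1 \<Rightarrow> 'a set" where
  "left_kernel s = {r. s * r = 0}"

definition core :: "'a::ring_1 set \<Rightarrow> 'a set" where
  "core S = {s \<in> S. left_kernel s = ass S}"

definition set_prod :: "'a::ring_1 set \<Rightarrow> 'a set \<Rightarrow> 'a set" where
  "set_prod A B = {s * t | s t. s \<in> A \<and> t \<in> B}"

end

theory Submission
  imports Defs
begin

text \<open>For \<open>s \<in> S\<close> one always has
  \<open>ker(s\<cdot>) \<subseteq> ass(S)\<close>, so \<open>s\<close> lies in the core as soon as it kills \<open>ass(S)\<close>.
  Left multiplication by \<open>S\<close> only enlarges kernels, which gives \<open>SS\<^sub>c \<subseteq> S\<^sub>c\<close>.
  The Ore condition makes \<open>ass(S)\<close> stable under left multiplication by \<open>S\<close>,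
  so for a core element \<open>c\<close> the product \<open>cs\<close> kills \<open>ass(S)\<close> and is in the core.\<close>

lemma left_ore_set_mult_closed:
  "left_ore_set S \<Longrightarrow> s \<in> S \<Longrightarrow> t \<in> S \<Longrightarrow> s * t \<in> S"
  unfolding left_ore_set_def mult_subset_def by blast

lemma left_kernel_subset_ass: "s \<in> S \<Longrightarrow> left_kernel s \<subseteq> ass S"
  unfolding left_kernel_def ass_def by blast

lemma left_kernel_subset_left_kernel_mult: "left_kernel b \<subseteq> left_kernel (a * b)"
  unfolding left_kernel_def by (auto simp: mult.assoc)

lemma core_iff: "s \<in> core S \<longleftrightarrow> s \<in> S \<and> ass S \<subseteq> left_kernel s"
  unfolding core_def using left_kernel_subset_ass by blast

lemma left_ore_mult_ass:
  assumes "left_ore_set S" and "s \<in> S" and "x \<in> ass S"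
  shows "s * x \<in> ass S"
proof -
  obtain u where u: "u \<in> S" "u * x = 0"
    using assms(3) unfolding ass_def by blast
  obtain t r where t: "t \<in> S" "t * s = r * u"
    using assms(1) u(1) unfolding left_ore_set_def by blast
  have "t * (s * x) = 0"
    by (simp add: mult.assoc [symmetric] t(2)) (simp add: mult.assoc u(2))
  with t(1) show ?thesis unfolding ass_def by blast
qed

lemma left_ore_mult_core:
  assumes "left_ore_set S" and "s \<in> S" and "d \<in> core S"
  shows "s * d \<in> core S"
proof -
  have "s * d \<in> S" using assms left_ore_set_mult_closed core_iff by blast
  moreover have "ass S \<subseteq> left_kernel (s * d)"
    using assms(3) left_kernel_subset_left_kernel_mult core_iff by blast
  ultimately show ?thesis by (simp add: core_iff)
qed

lemma set_prod_core_subset_core: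
  "left_ore_set S \<Longrightarrow> set_prod S (core S) \<subseteq> core S"
  unfolding set_prod_def using left_ore_mult_core by blast

lemma left_ore_core_mult:
  assumes "left_ore_set S" and "c \<in> core S" and "s \<in> S"
  shows "c * s \<in> core S"
proof -
  have "c * s \<in> S" using assms left_ore_set_mult_closed core_iff by blast
  moreover have "ass S \<subseteq> left_kernel (c * s)"
  proof
    fix x assume "x \<in> ass S"
    then have "s * x \<in> left_kernel c"
      using assms left_ore_mult_ass core_iff by blast
    then show "x \<in> left_kernel (c * s)" by (simp add: left_kernel_def mult.assoc)
  qed
  ultimately show ?thesis by (simp add: core_iff)
qed

theorem lemma4p1:
  fixes S :: "'a::ring_1 set"
  assumes "left_denominator_set S"
    and "core S \<noteq> {}"
  shows "set_prod S (core S) \<subseteq> core S \<and>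
    (\<forall>s\<in>S. \<exists>t\<in>S. t * s \<in> core S)"
proof -
  have ore: "left_ore_set S" using assms(1) by (simp add: left_denominator_set_def)
  obtain c where c: "c \<in> core S" using assms(2) by blast
  then have "c \<in> S" by (simp add: core_iff)
  then have "\<forall>s\<in>S. \<exists>t\<in>S. t * s \<in> core S"
    using left_ore_core_mult[OF ore c] by blast
  with set_prod_core_subset_core[OF ore] show ?thesis by blast
qed

end
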